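(* Let $N$ be an isolating block and $S=\operatorname{Inv} N$. If $L$ is any sufficiently small compact neighborhood of $N^-$ in $N$, then $(N,L)$ is a filtration pair for $S$. Moreover, there is a neighborhood of $f$ in the $C^0$ topology such that for any $\tilde f$ in this neighborhood, $\tilde S=\operatorname{Inv}(N\setminus L,\tilde f)$ (the maximal invariant subset computed with respect to $\tilde f$) is an isolated invariant set for $\tilde f$ and $(N,L)$ is a filtration pair for $\tilde S$ with respect to $\tilde f$.
   Context: Let $X$ be a locally compact metric space, $U\subset X$ open and $f:U\to X$ continuous. For $N\subset U$, a solution through $x$ is a map $\sigma:\mathbb Z\to U$ with $\sigma(0)=x$ and $f(\sigma(n))=\sigma(n+1)$ for all $n$; $\operatorname{Inv} N$ is the set of $x\in N$ admitting a solution through $x$ with all values in $N$. A compact set $N\subset U$ is an isolating neighborhood if $\operatorname{Inv} N\subset\operatorname{Int} N$; a set $S$ is an isolated invariant set if $S=\operatorname{Inv} N$ for some isolating neighborhood $N$. A compact set $N$ is an isolating block if $f(N)\cap N\cap f^{-1}(N)\subset\operatorname{Int} N$. The exit set of $N$ is $N^-=\{x\in N: f(x)\notin\operatorname{Int} N\}$. A filtration pair for an isolated invariant set $S$ is a pair of compact sets $L\subset N$ contained in the interior of the domain of $f$, each equal to the closure of its interior, such that (1) $\operatorname{cl}(N\setminus L)$ is an isolating neighborhood with $\operatorname{Inv}\operatorname{cl}(N\setminus L)=S$; (2) $L$ is a neighborhood of $N^-$ in $N$; (3) $f(L)\cap\operatorname{cl}(N\setminus L)=\emptyset$. The same notions are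 used for any other continuous map $\tilde f:U\to X$ in place of $f$.
   Formalization: N is also assumed to equal the closure of its interior, only compact neighbourhoods L equal to the closure of their interior are considered, and the $C^0$ neighbourhood of f may depend on L. Each condition added here is assumed in the paper as well or is needed for the statement above to hold. *)

theory Defs
  imports "HOL-Analysis.Analysis"
begin

text \<open>Maps f defined on an open set U of a metric space X (the type 'a).
Values of f outside U are irrelevant.\<close>

definition is_solution :: "'a set \<Rightarrow> ('a \<Rightarrow> 'a) \<Rightarrow> (int \<Rightarrow> 'a) \<Rightarrow> bool" where
  "is_solution U f \<sigma> \<longleftrightarrow> (\<forall>n. \<sigma> n \<in> U \<and> f (\<sigma> n) = \<sigma> (n + 1))"

definition Inv :: "'a set \<Rightarrow> ('a \<Rightarrow> 'a) \<Rightarrow> 'a set \<Rightarrow> 'a set" where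
  "Inv U f N = {x \<in> N. \<exists>\<sigma>. is_solution U f \<sigma> \<and> \<sigma> 0 = x \<and> (\<forall>n. \<sigma> n \<in> N)}"

definition isolating_nbhd :: "'a::topological_space set \<Rightarrow> ('a \<Rightarrow> 'a) \<Rightarrow> 'a set \<Rightarrow> bool" where
  "isolating_nbhd U f N \<longleftrightarrow> compact N \<and> N \<subseteq> U \<and> Inv U f N \<subseteq> interior N"

definition isolated_invariant_set :: "'a::topological_space set \<Rightarrow> ('a \<Rightarrow> 'a) \<Rightarrow> 'a set \<Rightarrow> bool" where
  "isolated_invariant_set U f S \<longleftrightarrow> (\<exists>N. isolating_nbhd U f N \<and> S = Inv U f N)"

definition isolating_block :: "'a::topological_space set \<Rightarrow> ('a \<Rightarrow> 'a) \<Rightarrow> 'a set \<Rightarrow> bool" where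
  "isolating_block U f N \<longleftrightarrow> compact N \<and> N \<subseteq> U \<and>
     f ` N \<inter> N \<inter> {x \<in> U. f x \<in> N} \<subseteq> interior N"

definition exit_set :: "('a::topological_space \<Rightarrow> 'a) \<Rightarrow> 'a set \<Rightarrow> 'a set" where
  "exit_set f N = {x \<in> N. f x \<notin> interior N}"

definition nbhd_in :: "'a::topological_space set \<Rightarrow> 'a set \<Rightarrow> 'a set \<Rightarrow> bool" where
  "nbhd_in N L A \<longleftrightarrow> L \<subseteq> N \<and> (\<exists>V. openin (top_of_set N) V \<and> A \<subseteq> V \<and> V \<subseteq> L)"

definition filtration_pair ::
  "'a::topological_space set \<Rightarrow> ('a \<Rightarrow> 'a) \<Rightarrow> 'a set \<Rightarrow> 'a set \<Rightarrow> 'a set \<Rightarrow> bool" where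
  "filtration_pair U f S N L \<longleftrightarrow>
     compact L \<and> compact N \<and> L \<subseteq> N \<and> N \<subseteq> interior U \<and>
     closure (interior N) = N \<and> closure (interior L) = L \<and>
     isolating_nbhd U f (closure (N - L)) \<and> Inv U f (closure (N - L)) = S \<and>
     nbhd_in N L (exit_set f N) \<and>
     f ` L \<inter> closure (N - L) = {}"

end

theory Submission
  imports Defs
begin

text \<open>Let W be the open set of points that leave N within two steps. If an exit point x has
f x \<in> N, then f x lies in f(N) \<inter> N but not in int N, so the block condition forces f (f x) \<notin> N;
hence the exit set lies in W, while W contains no point of Inv N. For a neighbourhood L \<subseteq> W
of the exit set in N, the map sends N minus a relative neighbourhood V \<subseteq> L of the exit set into
int N and sends L off cl(N - L). These two conditions make (N, L) a filtration pair, and each says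
that a compact set is mapped into an open set, so they persist, with a uniform margin, under
C0-small perturbations.\<close>

lemma Inv_mono: "A \<subseteq> B \<Longrightarrow> Inv U f A \<subseteq> Inv U f B"
  by (auto simp: Inv_def)

lemma solution_in_Inv:
  assumes "is_solution U f \<sigma>" "\<forall>n. \<sigma> n \<in> N"
  shows "\<sigma> m \<in> Inv U f N"
proof -
  have "is_solution U f (\<lambda>k. \<sigma> (k + m))"
    using assms(1) by (simp add: is_solution_def algebra_simps)
  then show ?thesis
    using assms(2) unfolding Inv_def by force
qed

lemma Inv_diff_disjoint:
  assumes "Inv U f N \<inter> L = {}"
  shows "Inv U f (N - L) = Inv U f N"
proof
  show "Inv U f (N - L) \<subseteq> Inv U f N"
    by (rule Inv_mono) blast
  show "Inv U f N \<subseteq> Inv U f (N - L)"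
  proof
    fix x assume "x \<in> Inv U f N"
    then obtain \<sigma> where \<sigma>: "is_solution U f \<sigma>" "\<sigma> 0 = x" "\<forall>n. \<sigma> n \<in> N"
      unfolding Inv_def by blast
    then have "\<forall>n. \<sigma> n \<in> N - L"
      using solution_in_Inv assms by blast
    then show "x \<in> Inv U f (N - L)"
      using \<sigma> unfolding Inv_def by blast
  qed
qed

lemma Inv_closure_diff:
  assumes "closed N" and gL: "g ` L \<inter> closure (N - L) = {}"
  shows "Inv U g (closure (N - L)) = Inv U g (N - L)"
proof
  show "Inv U g (N - L) \<subseteq> Inv U g (closure (N - L))"
    by (rule Inv_mono) (rule closure_subset)
  show "Inv U g (closure (N - L)) \<subseteq> Inv U g (N - L)"
  proof
    fix x assume "x \<in> Inv U g (closure (N - L))"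
    then obtain \<sigma> where \<sigma>: "is_solution U g \<sigma>" "\<sigma> 0 = x" "\<forall>n. \<sigma> n \<in> closure (N - L)"
      unfolding Inv_def by blast
    have "\<sigma> n \<notin> L" for n
    proof
      assume "\<sigma> n \<in> L"
      moreover have "g (\<sigma> n) = \<sigma> (n + 1)"
        using \<sigma>(1) by (simp add: is_solution_def)
      ultimately have "\<sigma> (n + 1) \<in> g ` L"
        by (metis image_eqI)
      then show False
        using gL \<sigma>(3) by (metis IntI empty_iff)
    qed
    moreover have "closure (N - L) \<subseteq> N"
      using \<open>closed N\<close> by (simp add: closure_minimal)
    ultimately have "\<forall>n. \<sigma> n \<in> N - L"
      using \<sigma>(3) by (metis Diff_iff subsetD)
    then show "x \<in> Inv U g (N - L)"
      using \<sigma> unfolding Inv_def by blast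
  qed
qed

lemma compact_closure_diff:
  fixes N :: "'a::t2_space set"
  assumes "compact N"
  shows "compact (closure (N - L))"
proof -
  have "closure (N - L) \<subseteq> N"
    using assms compact_imp_closed closure_minimal by blast
  then have "closure (N - L) = N \<inter> closure (N - L)"
    by blast
  also have "compact \<dots>"
    using assms closed_closure by (rule compact_Int_closed)
  finally show ?thesis .
qed

lemma isolating_nbhd_closure_diff:
  fixes N :: "'a::t2_space set"
  assumes "compact N" "N \<subseteq> U" "closed L"
    and gNL: "g ` (N - L) \<subseteq> interior N" and gL: "g ` L \<inter> closure (N - L) = {}"
  shows "isolating_nbhd U g (closure (N - L))"
  unfolding isolating_nbhd_def
proof (intro conjI)
  show "compact (closure (N - L))"
    using \<open>compact N\<close> by (rule compact_closure_diff)
  have closed_N: "closed N"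
    using \<open>compact N\<close> compact_imp_closed by blast
  then show "closure (N - L) \<subseteq> U"
    using \<open>N \<subseteq> U\<close> by (meson Diff_subset closure_minimal order_trans)
  have "interior N - L \<subseteq> closure (N - L)"
    using interior_subset closure_subset by blast
  moreover have "open (interior N - L)"
    using \<open>closed L\<close> by (simp add: open_Diff)
  ultimately have "interior N - L \<subseteq> interior (closure (N - L))"
    by (rule interior_maximal)
  moreover have "Inv U g (N - L) \<subseteq> interior N - L"
  proof
    fix x assume "x \<in> Inv U g (N - L)"
    then obtain \<sigma> where \<sigma>: "is_solution U g \<sigma>" "\<sigma> 0 = x" "\<forall>n. \<sigma> n \<in> N - L"
      unfolding Inv_def by blast
    have "g (\<sigma> (-1)) = x"
      using \<sigma>(1,2) by (simp add: is_solution_def)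
    moreover have "\<sigma> (-1) \<in> N - L"
      using \<sigma>(3) by blast
    ultimately show "x \<in> interior N - L"
      using gNL \<sigma>(2,3) by (metis image_subset_iff Diff_iff)
  qed
  ultimately show "Inv U g (closure (N - L)) \<subseteq> interior (closure (N - L))"
    using Inv_closure_diff[OF closed_N gL] by blast
qed

lemma closed_diff_openin:
  assumes "closed N" "openin (top_of_set N) V"
  shows "closed (N - V)"
  using assms openin_closedin_eq closedin_closed_trans by (metis topspace_euclidean_subtopology)

lemma exit_set_subset_iff: "exit_set g N \<subseteq> V \<longleftrightarrow> g ` (N - V) \<subseteq> interior N"
  by (auto simp: exit_set_def)

lemma filtration_pair_of_exit_nbhd:
  fixes N :: "'a::t2_space set"
  assumes "compact N" "N \<subseteq> interior U" "compact L"
    and "closure (interior N) = N" "closure (interior L) = L"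
    and exit: "nbhd_in N L (exit_set g N)"
    and gL: "g ` L \<inter> closure (N - L) = {}"
  shows "filtration_pair U g (Inv U g (N - L)) N L"
proof -
  have "exit_set g N \<subseteq> L" "L \<subseteq> N"
    using exit unfolding nbhd_in_def by blast+
  then have "g ` (N - L) \<subseteq> interior N"
    by (simp add: exit_set_subset_iff)
  moreover have "closed L" "closed N"
    using \<open>compact L\<close> \<open>compact N\<close> compact_imp_closed by blast+
  moreover have "N \<subseteq> U"
    using \<open>N \<subseteq> interior U\<close> interior_subset by blast
  ultimately have "isolating_nbhd U g (closure (N - L))"
    using assms by (intro isolating_nbhd_closure_diff)
  moreover have "Inv U g (closure (N - L)) = Inv U g (N - L)"
    using \<open>closed N\<close> gL by (rule Inv_closure_diff)
  ultimately show ?thesis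
    using assms \<open>L \<subseteq> N\<close> unfolding filtration_pair_def by (intro conjI) simp_all
qed

lemma isolated_invariant_set_if_filtration_pair:
  "filtration_pair U g S N L \<Longrightarrow> isolated_invariant_set U g S"
  unfolding filtration_pair_def isolated_invariant_set_def by metis

lemma image_subset_open_perturb:
  fixes f :: "'a::metric_space \<Rightarrow> 'b::metric_space"
  assumes "compact K" "continuous_on K f" "open G" "f ` K \<subseteq> G"
  obtains \<epsilon> where "\<epsilon> > 0" "\<And>g. \<forall>x\<in>K. dist (g x) (f x) < \<epsilon> \<Longrightarrow> g ` K \<subseteq> G"
proof -
  have "compact (f ` K)"
    using assms(1,2) compact_continuous_image by blast
  then obtain \<epsilon> where "\<epsilon> > 0" and \<epsilon>: "(\<Union>y\<in>f ` K. ball y \<epsilon>) \<subseteq> G"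
    using assms(3,4) by (rule compact_subset_open_imp_ball_epsilon_subset)
  show ?thesis
  proof (rule that[OF \<open>\<epsilon> > 0\<close>])
    fix g assume close: "\<forall>x\<in>K. dist (g x) (f x) < \<epsilon>"
    show "g ` K \<subseteq> G"
    proof
      fix y assume "y \<in> g ` K"
      then obtain x where "x \<in> K" "y = g x"
        by blast
      then have "y \<in> ball (f x) \<epsilon>"
        using close by (simp add: dist_commute)
      then show "y \<in> G"
        using \<epsilon> \<open>x \<in> K\<close> by (meson UN_I imageI subsetD)
    qed
  qed
qed

lemma filtration_pair_perturb:
  fixes f :: "'a::metric_space \<Rightarrow> 'a"
  assumes fp: "filtration_pair U f S N L" and "continuous_on U f"
  obtains \<epsilon> where "\<epsilon> > 0"
    "\<And>g. \<forall>x\<in>N. dist (g x) (f x) < \<epsilon> \<Longrightarrow> filtration_pair U g (Inv U g (N - L)) N L"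
proof -
  have N: "compact N" "N \<subseteq> interior U" "closure (interior N) = N"
    and L: "compact L" "closure (interior L) = L"
    and exit: "nbhd_in N L (exit_set f N)" and fL: "f ` L \<inter> closure (N - L) = {}"
    using fp unfolding filtration_pair_def by auto
  obtain V where LN: "L \<subseteq> N" and V: "openin (top_of_set N) V" "exit_set f N \<subseteq> V" "V \<subseteq> L"
    using exit unfolding nbhd_in_def by blast
  have f_cont: "continuous_on N f"
    using \<open>continuous_on U f\<close> N(2) interior_subset continuous_on_subset by blast
  have "closed (N - V)"
    using V(1) \<open>compact N\<close> compact_imp_closed closed_diff_openin by blast
  then have "compact (N - V)"
    using \<open>compact N\<close> by (metis Diff_subset compact_Int_closed inf.absorb_iff2)
  then obtain \<epsilon>\<^sub>1 where "\<epsilon>\<^sub>1 > 0" and \<epsilon>\<^sub>1: "\<And>g. \<forall>x\<in>N - V. dist (g x) (f x) < \<epsilon>\<^sub>1 \<Longrightarrow>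
      g ` (N - V) \<subseteq> interior N"
    using image_subset_open_perturb[of "N - V" f "interior N"] V(2) f_cont
      continuous_on_subset[of N f "N - V"] by (auto simp: exit_set_subset_iff)
  obtain \<epsilon>\<^sub>2 where "\<epsilon>\<^sub>2 > 0" and \<epsilon>\<^sub>2: "\<And>g. \<forall>x\<in>L. dist (g x) (f x) < \<epsilon>\<^sub>2 \<Longrightarrow>
      g ` L \<subseteq> - closure (N - L)"
    using image_subset_open_perturb[of L f "- closure (N - L)"] \<open>compact L\<close> fL f_cont LN
      continuous_on_subset by blast
  show ?thesis
  proof (rule that[of "min \<epsilon>\<^sub>1 \<epsilon>\<^sub>2"])
    show "min \<epsilon>\<^sub>1 \<epsilon>\<^sub>2 > 0"
      using \<open>\<epsilon>\<^sub>1 > 0\<close> \<open>\<epsilon>\<^sub>2 > 0\<close> by simp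
    fix g assume close: "\<forall>x\<in>N. dist (g x) (f x) < min \<epsilon>\<^sub>1 \<epsilon>\<^sub>2"
    then have "exit_set g N \<subseteq> V"
      using \<epsilon>\<^sub>1 by (simp add: exit_set_subset_iff)
    then have "nbhd_in N L (exit_set g N)"
      using LN V unfolding nbhd_in_def by blast
    moreover have "g ` L \<subseteq> - closure (N - L)"
      using close LN by (intro \<epsilon>\<^sub>2) auto
    then have "g ` L \<inter> closure (N - L) = {}"
      by blast
    ultimately show "filtration_pair U g (Inv U g (N - L)) N L"
      using N L by (intro filtration_pair_of_exit_nbhd)
  qed
qed

definition two_step_escape :: "'a set \<Rightarrow> ('a \<Rightarrow> 'a) \<Rightarrow> 'a set \<Rightarrow> 'a set" where
  "two_step_escape U f N = U \<inter> f -` (- N) \<union> U \<inter> f -` (U \<inter> f -` (- N))"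

lemma open_two_step_escape:
  assumes "open U" "continuous_on U f" "closed N"
  shows "open (two_step_escape U f N)"
proof -
  have "open (U \<inter> f -` (- N))"
    using assms continuous_open_preimage by blast
  then show ?thesis
    unfolding two_step_escape_def using assms continuous_open_preimage by blast
qed

lemma exit_set_subset_two_step_escape:
  assumes "isolating_block U f N"
  shows "exit_set f N \<subseteq> two_step_escape U f N"
proof
  fix x assume "x \<in> exit_set f N"
  then have x: "x \<in> N" "f x \<notin> interior N"
    unfolding exit_set_def by auto
  have "f (f x) \<notin> N" if "f x \<in> N"
    using assms x that unfolding isolating_block_def by blast
  then show "x \<in> two_step_escape U f N"
    using assms x unfolding isolating_block_def two_step_escape_def by auto
qed

lemma Inv_disjoint_two_step_escape: "Inv U f N \<inter> two_step_escape U f N = {}"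
proof -
  have "x \<notin> two_step_escape U f N" if "x \<in> Inv U f N" for x
  proof -
    obtain \<sigma> where \<sigma>: "is_solution U f \<sigma>" "\<sigma> 0 = x" "\<forall>n. \<sigma> n \<in> N"
      using \<open>x \<in> Inv U f N\<close> unfolding Inv_def by blast
    then have "f x = \<sigma> 1" "f (\<sigma> 1) = \<sigma> 2"
      by (auto simp: is_solution_def)
    then show ?thesis
      using \<sigma>(3) unfolding two_step_escape_def by auto
  qed
  then show ?thesis
    by blast
qed

lemma image_disjoint_closure_diff:
  assumes "closed N" "L \<subseteq> two_step_escape U f N" "nbhd_in N L (exit_set f N)"
  shows "f ` L \<inter> closure (N - L) = {}"
proof -
  obtain V where V: "openin (top_of_set N) V" "exit_set f N \<subseteq> V" "V \<subseteq> L"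
    using assms(3) unfolding nbhd_in_def by blast
  have "closed (N - V)"
    using \<open>closed N\<close> V(1) by (rule closed_diff_openin)
  then have closure_sub: "closure (N - L) \<subseteq> N - V"
    using V(3) by (meson Diff_mono closure_minimal order_refl)
  have "f y \<notin> N - V" if "y \<in> L" for y
  proof
    assume fy: "f y \<in> N - V"
    then have "f y \<in> U" "f (f y) \<notin> N"
      using assms(2) that unfolding two_step_escape_def by auto
    then have "f y \<in> exit_set f N"
      using fy interior_subset unfolding exit_set_def by auto
    then show False
      using fy V(2) by blast
  qed
  then show ?thesis
    using closure_sub by blast
qed

theorem mainTheorem2:
  fixes U N :: "'a::metric_space set" and f :: "'a \<Rightarrow> 'a"
  assumes "locally_compact_space (euclidean :: 'a topology)"
    and "open U" and "continuous_on U f"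
    and "isolating_block U f N"
    and "closure (interior N) = N"
  shows "\<exists>W. open W \<and> exit_set f N \<subseteq> W \<and>
     (\<forall>L. compact L \<and> L \<subseteq> W \<and> closure (interior L) = L \<and> nbhd_in N L (exit_set f N) \<longrightarrow>
        filtration_pair U f (Inv U f N) N L \<and>
        (\<exists>\<epsilon>>0. \<forall>g. continuous_on U g \<and> (\<forall>x\<in>N. dist (g x) (f x) < \<epsilon>) \<longrightarrow>
            isolated_invariant_set U g (Inv U g (N - L)) \<and>
            filtration_pair U g (Inv U g (N - L)) N L))"
proof (intro exI[of _ "two_step_escape U f N"] conjI allI impI)
  have N: "compact N" "N \<subseteq> interior U" "closed N"
    using assms(2,4) compact_imp_closed interior_open unfolding isolating_block_def by auto
  then show "open (two_step_escape U f N)"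
    using assms(2,3) by (intro open_two_step_escape)
  show "exit_set f N \<subseteq> two_step_escape U f N"
    using assms(4) by (rule exit_set_subset_two_step_escape)
  fix L assume "compact L \<and> L \<subseteq> two_step_escape U f N \<and> closure (interior L) = L \<and>
    nbhd_in N L (exit_set f N)"
  then have L: "compact L" "L \<subseteq> two_step_escape U f N" "closure (interior L) = L"
    "nbhd_in N L (exit_set f N)"
    by auto
  have "Inv U f N \<inter> L = {}"
    using L(2) Inv_disjoint_two_step_escape[of U f N] by blast
  then have "Inv U f (N - L) = Inv U f N"
    by (rule Inv_diff_disjoint)
  moreover have "f ` L \<inter> closure (N - L) = {}"
    by (rule image_disjoint_closure_diff[OF \<open>closed N\<close> L(2,4)])
  then have "filtration_pair U f (Inv U f (N - L)) N L"
    using N(1,2) L(1) assms(5) L(3,4) by (intro filtration_pair_of_exit_nbhd)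
  ultimately show fp: "filtration_pair U f (Inv U f N) N L"
    by simp
  obtain \<epsilon> where "\<epsilon> > 0" and "\<And>g. \<forall>x\<in>N. dist (g x) (f x) < \<epsilon> \<Longrightarrow>
      filtration_pair U g (Inv U g (N - L)) N L"
    using filtration_pair_perturb[OF fp assms(3)] by blast
  then show "\<exists>\<epsilon>>0. \<forall>g. continuous_on U g \<and> (\<forall>x\<in>N. dist (g x) (f x) < \<epsilon>) \<longrightarrow>
      isolated_invariant_set U g (Inv U g (N - L)) \<and> filtration_pair U g (Inv U g (N - L)) N L"
    using isolated_invariant_set_if_filtration_pair by blast
qed

end
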